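(* There is an absolute constant $C$ such that the following holds: if $\Gamma_\mathcal{D}$ is the incidence graph of an $\mathrm{STD}_\lambda[k;g]$ (with $\lambda\ge1$, $g\ge2$), having $n=2\lambda g^2$ vertices, then $\mu(\Gamma_\mathcal{D})\le C\sqrt{n}\log n$; that is, $\mu(\Gamma_\mathcal{D})=O(\sqrt{n}\log n)$.
   Context: A transversal design $\mathrm{TD}_\lambda[k;g]$ ($g\ge2$) is a triple $(X,\mathcal{G},\mathcal{B})$ where $X$ is a set of $kg$ points, $\mathcal{G}$ is a partition of $X$ into $k$ point classes of size $g$, and $\mathcal{B}$ is a family of $k$-subsets of $X$ (blocks) such that each block contains exactly one point of each point class and any two points from distinct point classes lie in exactly $\lambda$ blocks. It is symmetric (an $\mathrm{STD}_\lambda[k;g]$) if its dual (interchanging points and blocks) is also a $\mathrm{TD}_\lambda[k;g]$; then $k=\lambda g$ and $|X|=|\mathcal{B}|=\lambda g^2$. The incidence graph is the bipartite graph on $X\cup\mathcal{B}$ with $x$ adjacent to $B$ iff $x\in B$. A resolving set of a connected graph is a set $S$ of vertices such that for any two distinct vertices $u,w$ some $s\in S$ has $d(u,s)\neq d(w,s)$; the metric dimension $\mu(\Gamma)$ is the minimum size of a resolving set. *)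

theory Defs
  imports Complex_Main "HOL-Library.Disjoint_Sets"
begin

text \<open>A transversal design TD_lambda[k;g] given as an incidence structure:
  point set P, block index set Bl (blocks are indexed, so repeated blocks are
  allowed, i.e. a family of k-subsets), incidence relation I p b meaning
  "point p lies in block b".\<close>
definition TD :: "nat \<Rightarrow> nat \<Rightarrow> nat \<Rightarrow> 'p set \<Rightarrow> 'b set \<Rightarrow> ('p \<Rightarrow> 'b \<Rightarrow> bool) \<Rightarrow> bool" where
  "TD lam k g P Bl I \<longleftrightarrow>
     g \<ge> 2 \<and> finite P \<and> finite Bl \<and> card P = k * g \<and>
     (\<exists>G. partition_on P G \<and> card G = k \<and> (\<forall>c\<in>G. card c = g) \<and>
        (\<forall>b\<in>Bl. card {p\<in>P. I p b} = k \<and> (\<forall>c\<in>G. card {p\<in>c. I p b} = 1)) \<and>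
        (\<forall>c1\<in>G. \<forall>c2\<in>G. c1 \<noteq> c2 \<longrightarrow> (\<forall>p\<in>c1. \<forall>q\<in>c2.
            card {b\<in>Bl. I p b \<and> I q b} = lam)))"

definition STD :: "nat \<Rightarrow> nat \<Rightarrow> nat \<Rightarrow> 'p set \<Rightarrow> 'b set \<Rightarrow> ('p \<Rightarrow> 'b \<Rightarrow> bool) \<Rightarrow> bool" where
  "STD lam k g P Bl I \<longleftrightarrow> TD lam k g P Bl I \<and> TD lam k g Bl P (\<lambda>b p. I p b)"

definition inc_vertices :: "'p set \<Rightarrow> 'b set \<Rightarrow> ('p + 'b) set" where
  "inc_vertices P Bl = Inl ` P \<union> Inr ` Bl"

definition inc_edges :: "'p set \<Rightarrow> 'b set \<Rightarrow> ('p \<Rightarrow> 'b \<Rightarrow> bool) \<Rightarrow> ('p + 'b) rel" where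
  "inc_edges P Bl I =
     {(Inl p, Inr b) | p b. p \<in> P \<and> b \<in> Bl \<and> I p b} \<union>
     {(Inr b, Inl p) | p b. p \<in> P \<and> b \<in> Bl \<and> I p b}"

definition gdist :: "'v rel \<Rightarrow> 'v \<Rightarrow> 'v \<Rightarrow> nat" where
  "gdist E u v = (LEAST n. (u, v) \<in> E ^^ n)"

definition resolving :: "'v set \<Rightarrow> 'v rel \<Rightarrow> 'v set \<Rightarrow> bool" where
  "resolving V E S \<longleftrightarrow> S \<subseteq> V \<and>
     (\<forall>u\<in>V. \<forall>w\<in>V. u \<noteq> w \<longrightarrow> (\<exists>s\<in>S. gdist E u s \<noteq> gdist E w s))"

definition metric_dim :: "'v set \<Rightarrow> 'v rel \<Rightarrow> nat" where
  "metric_dim V E = (LEAST m. \<exists>S. resolving V E S \<and> finite S \<and> card S = m)"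

end

theory Submission
  imports Defs "HOL-Library.FuncSet" "HOL-Library.Log_Nat" "HOL-Analysis.Harmonic_Numbers"
begin

text \<open>If \<open>k \<ge> 2\<close>, then \<open>k = \<lambda>g\<close>, and two distinct points lie together in at most \<open>\<lambda>\<close> of
  their \<open>\<lambda>g\<close> blocks, so at least \<open>2(\<lambda>g - \<lambda>) \<ge> \<lambda>g\<close> of the \<open>N = kg\<close> blocks contain exactly one of
  them; dually for two blocks. The incidence graph is connected and bipartite, so a point and a
  block differ in the parity of their distances to any vertex, two points are told apart by a
  block through exactly one of them, and two blocks by a point on exactly one of them. Choosing
  \<open>t = (g - 1) s\<close> blocks at random with \<open>N\<^sup>2 < 2\<^sup>s\<close>, a fixed pair of points is missed with
  probability at most \<open>(1 - 1/g)\<^sup>t \<le> 2\<^sup>-\<^sup>s\<close>, so some \<open>t\<close> blocks separate all pairs of points, and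
  similarly \<open>t\<close> points separate all pairs of blocks. This gives
  \<open>\<mu> \<le> 2(g - 1)s = O(g log N) = O(\<surd>n log n)\<close>. For \<open>k \<le> 1\<close> the whole vertex set, of size at
  most \<open>2g\<close>, is resolving.\<close>

section \<open>Graph distance and resolving sets\<close>

lemma gdist_relpow:
  assumes "(u, v) \<in> E\<^sup>*"
  shows "(u, v) \<in> E ^^ gdist E u v"
  unfolding gdist_def by (rule LeastI_ex) (use assms rtrancl_power in blast)

lemma gdist_refl [simp]: "gdist E u u = 0"
  unfolding gdist_def by (rule Least_equality) auto

lemma gdist_eq_1_iff:
  assumes "(u, v) \<in> E\<^sup>*" "u \<noteq> v"
  shows "gdist E u v = 1 \<longleftrightarrow> (u, v) \<in> E"
proof
  assume "gdist E u v = 1"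
  then show "(u, v) \<in> E" using gdist_relpow[OF assms(1)] by simp
next
  assume "(u, v) \<in> E"
  show "gdist E u v = 1"
    unfolding gdist_def
  proof (rule Least_equality)
    fix n assume "(u, v) \<in> E ^^ n"
    with assms(2) show "1 \<le> n" by (cases n) auto
  qed (use \<open>(u, v) \<in> E\<close> in simp)
qed

text \<open>Unreachable pairs all receive the same unspecified distance \<open>LEAST n. False\<close>.\<close>
lemma gdist_unreachable:
  assumes "(u, v) \<notin> E\<^sup>*"
  shows "gdist E u v = (LEAST n::nat. False)"
  unfolding gdist_def using assms rtrancl_power by meson

lemma relpow_isl_parity:
  fixes E :: "('a + 'b) rel"
  assumes "\<forall>(x, y)\<in>E. isl x \<noteq> isl y"
  shows "(u, v) \<in> E ^^ n \<Longrightarrow> isl u = isl v \<longleftrightarrow> even n"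
proof (induction n arbitrary: v)
  case (Suc n)
  then obtain w where "(u, w) \<in> E ^^ n" "(w, v) \<in> E" by auto
  then show ?case using Suc.IH assms by fastforce
qed simp

lemma gdist_isl_parity:
  fixes E :: "('a + 'b) rel"
  assumes "\<forall>(x, y)\<in>E. isl x \<noteq> isl y" "(u, v) \<in> E\<^sup>*"
  shows "isl u = isl v \<longleftrightarrow> even (gdist E u v)"
  using relpow_isl_parity[OF assms(1) gdist_relpow[OF assms(2)]] .

lemma metric_dim_le_card:
  assumes "resolving V E S" "finite S"
  shows "metric_dim V E \<le> card S"
  unfolding metric_dim_def by (rule Least_le) (use assms in blast)

lemma resolving_self:
  assumes "sym E" and no_isolated: "\<And>u. u \<in> V \<Longrightarrow> \<exists>v\<in>V. (u, v) \<in> E \<and> u \<noteq> v"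
  shows "resolving V E V"
  unfolding resolving_def
proof (intro conjI ballI impI subset_refl)
  fix u w assume u: "u \<in> V" and w: "w \<in> V" and "u \<noteq> w"
  show "\<exists>s\<in>V. gdist E u s \<noteq> gdist E w s"
  proof (cases "gdist E w u = 0")
    case True
    then have unreachable: "(w, u) \<notin> E\<^sup>*"
      using gdist_relpow \<open>u \<noteq> w\<close> by (metis relpow_0_E)
    obtain v where v: "v \<in> V" "(u, v) \<in> E" "u \<noteq> v" using no_isolated[OF u] by blast
    have "(w, v) \<notin> E\<^sup>*"
      using unreachable v(2) \<open>sym E\<close> by (meson rtrancl.rtrancl_into_rtrancl symD)
    then have "gdist E w v = 0" using unreachable True by (simp add: gdist_unreachable)
    moreover have "gdist E u v = 1" using v gdist_eq_1_iff r_into_rtrancl by metis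
    ultimately show ?thesis using v(1) by force
  qed (use u in force)
qed

section \<open>Hitting sets by counting\<close>

text \<open>First moment method: a uniformly random \<open>t\<close>-tuple from \<open>A\<close> misses a given \<open>D x\<close>
  with probability at most \<open>(1 - m/|A|)^t\<close>; the union bound over \<open>U\<close> stays below one.\<close>
lemma exists_hitting_set:
  fixes D :: "'u \<Rightarrow> 'a set"
  assumes "finite A" "finite U"
    and D: "\<And>x. x \<in> U \<Longrightarrow> D x \<subseteq> A" "\<And>x. x \<in> U \<Longrightarrow> m \<le> card (D x)"
    and count: "card U * (card A - m) ^ t < card A ^ t"
  shows "\<exists>T\<subseteq>A. card T \<le> t \<and> (\<forall>x\<in>U. T \<inter> D x \<noteq> {})"
proof -
  define Miss where "Miss = (\<Union>x\<in>U. \<Pi>\<^sub>E i\<in>{..<t}. A - D x)"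
  have "card Miss \<le> (\<Sum>x\<in>U. card (\<Pi>\<^sub>E i\<in>{..<t}. A - D x))"
    unfolding Miss_def by (rule card_UN_le[OF \<open>finite U\<close>])
  also have "\<dots> \<le> (\<Sum>x\<in>U. (card A - m) ^ t)"
  proof (rule sum_mono)
    fix x assume "x \<in> U"
    then have "card (A - D x) = card A - card (D x)"
      using D(1) \<open>finite A\<close> by (subst card_Diff_subset) (auto intro: finite_subset)
    then have "card (A - D x) \<le> card A - m" using D(2)[OF \<open>x \<in> U\<close>] by simp
    then show "card (\<Pi>\<^sub>E i\<in>{..<t}. A - D x) \<le> (card A - m) ^ t"
      by (simp add: card_PiE power_mono)
  qed
  also have "\<dots> < card (\<Pi>\<^sub>E i\<in>{..<t}. A)"
    using count by (simp add: card_PiE)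
  finally have "card Miss < card (\<Pi>\<^sub>E i\<in>{..<t}. A)" .
  moreover have "finite Miss" unfolding Miss_def using assms(1,2) by (auto intro!: finite_PiE)
  ultimately have "\<not> (\<Pi>\<^sub>E i\<in>{..<t}. A) \<subseteq> Miss" using card_mono leD by blast
  then obtain f where f: "f \<in> (\<Pi>\<^sub>E i\<in>{..<t}. A)" "f \<notin> Miss" by blast
  show ?thesis
  proof (intro exI conjI ballI)
    show "f ` {..<t} \<subseteq> A" "card (f ` {..<t}) \<le> t"
      using f(1) card_image_le[of "{..<t}" f] by auto
    fix x assume "x \<in> U"
    then obtain i where "i < t" "f i \<in> D x"
      using f unfolding Miss_def by (auto simp: PiE_def Pi_def)
    then show "f ` {..<t} \<inter> D x \<noteq> {}" by blast
  qed
qed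

lemma two_mult_pow_self_le_Suc_pow:
  assumes "a \<ge> 1"
  shows "2 * a ^ a \<le> (a + 1) ^ a"
proof -
  have "1 + real a * (1 / real a) \<le> (1 + 1 / real a) ^ a"
    by (rule Bernoulli_inequality) (auto intro: order_trans[of _ 0])
  then have "2 * real a ^ a \<le> (real a + 1) ^ a"
    using assms by (simp add: field_simps power_divide)
  then have "real (2 * a ^ a) \<le> real ((a + 1) ^ a)" by (simp add: add.commute)
  then show ?thesis by (simp only: of_nat_le_iff)
qed

text \<open>The integral form of \<open>(1 - 1/g)^((g - 1) s) \<le> 2^(-s)\<close>.\<close>
lemma two_pow_mult_pow_le:
  assumes "g \<ge> 2"
  shows "2 ^ s * (g - 1) ^ ((g - 1) * s) \<le> g ^ ((g - 1) * s)"
proof -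
  have "2 * (g - 1) ^ (g - 1) \<le> g ^ (g - 1)"
    using two_mult_pow_self_le_Suc_pow[of "g - 1"] assms by simp
  then have "(2 * (g - 1) ^ (g - 1)) ^ s \<le> (g ^ (g - 1)) ^ s" by (rule power_mono) simp
  then show ?thesis by (simp add: power_mult power_mult_distrib)
qed

lemma exists_small_hitting_set:
  fixes D :: "'u \<Rightarrow> 'a set"
  assumes "finite A" "A \<noteq> {}" "finite U" "card U < 2 ^ s" "g \<ge> 2" "card A \<le> m * g"
    and D: "\<And>x. x \<in> U \<Longrightarrow> D x \<subseteq> A" "\<And>x. x \<in> U \<Longrightarrow> m \<le> card (D x)"
  shows "\<exists>T\<subseteq>A. card T \<le> (g - 1) * s \<and> (\<forall>x\<in>U. T \<inter> D x \<noteq> {})"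
proof (rule exists_hitting_set[OF assms(1,3) D])
  define N where "N = card A"
  define t where "t = (g - 1) * s"
  have "(N - m) * g \<le> (g - 1) * N"
    using \<open>card A \<le> m * g\<close> by (simp add: N_def diff_mult_distrib algebra_simps)
  have "(N - m) ^ t * (2 ^ s * (g - 1) ^ t) \<le> (N - m) ^ t * g ^ t"
    using two_pow_mult_pow_le[OF \<open>g \<ge> 2\<close>, of s] unfolding t_def by (rule mult_left_mono) simp
  also have "\<dots> = ((N - m) * g) ^ t" by (simp add: power_mult_distrib)
  also have "\<dots> \<le> ((g - 1) * N) ^ t" using \<open>(N - m) * g \<le> (g - 1) * N\<close> by (rule power_mono) simp
  finally have "((N - m) ^ t * 2 ^ s) * (g - 1) ^ t \<le> N ^ t * (g - 1) ^ t"
    by (simp add: power_mult_distrib ac_simps)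
  then have miss_le: "(N - m) ^ t * 2 ^ s \<le> N ^ t"
    using \<open>g \<ge> 2\<close> by simp
  have "N > 0" using assms(1,2) by (simp add: N_def card_gt_0_iff)
  show "card U * (card A - m) ^ ((g - 1) * s) < card A ^ ((g - 1) * s)"
  proof (cases "(N - m) ^ t = 0")
    case False
    then have "card U * (N - m) ^ t < 2 ^ s * (N - m) ^ t"
      using \<open>card U < 2 ^ s\<close> by (intro mult_strict_right_mono) auto
    with miss_le have "card U * (N - m) ^ t < N ^ t" by (metis mult.commute order_less_le_trans)
    then show ?thesis unfolding N_def t_def .
  next
    case True
    then show ?thesis using \<open>N > 0\<close> unfolding N_def t_def by (metis mult_0_right zero_less_power)
  qed
qed

section \<open>Transversal designs\<close>

lemma TD_finite_card:
  assumes "TD lam k g P Bl I"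
  shows "finite P" "finite Bl" "card P = k * g" "g \<ge> 2"
  using assms unfolding TD_def by auto

lemma TD_block_size:
  assumes "TD lam k g P Bl I" "b \<in> Bl"
  shows "card {p\<in>P. I p b} = k"
  using assms unfolding TD_def by auto

lemma TD_classesE:
  assumes "TD lam k g P Bl I"
  obtains G where "partition_on P G" "card G = k" "\<And>c. c \<in> G \<Longrightarrow> card c = g"
    "\<And>b c. b \<in> Bl \<Longrightarrow> c \<in> G \<Longrightarrow> \<exists>!p. p \<in> c \<and> I p b"
    "\<And>c1 c2 p q. \<lbrakk>c1 \<in> G; c2 \<in> G; c1 \<noteq> c2; p \<in> c1; q \<in> c2\<rbrakk>
       \<Longrightarrow> card {b\<in>Bl. I p b \<and> I q b} = lam"
proof -
  obtain G where G: "partition_on P G" "card G = k" "\<forall>c\<in>G. card c = g"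
    and transversal: "\<forall>b\<in>Bl. \<forall>c\<in>G. card {p\<in>c. I p b} = 1"
    and lam: "\<forall>c1\<in>G. \<forall>c2\<in>G. c1 \<noteq> c2 \<longrightarrow> (\<forall>p\<in>c1. \<forall>q\<in>c2. card {b\<in>Bl. I p b \<and> I q b} = lam)"
    using assms unfolding TD_def by (elim conjE exE) blast
  have unique: "\<exists>!p. p \<in> c \<and> I p b" if "b \<in> Bl" "c \<in> G" for b c
  proof -
    have "card {p\<in>c. I p b} = 1" using transversal that by blast
    then obtain p where "{p\<in>c. I p b} = {p}" by (rule card_1_singletonE)
    then show ?thesis by (intro ex1I[of _ p]) (auto simp: set_eq_iff)
  qed
  show thesis using G(3) lam by (intro that[OF G(1,2) _ unique]) auto
qed

lemma TD_common_blocks_le: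
  assumes "TD lam k g P Bl I" "p \<in> P" "q \<in> P" "p \<noteq> q"
  shows "card {b\<in>Bl. I p b \<and> I q b} \<le> lam"
proof -
  obtain G where G: "partition_on P G" "card G = k" "\<And>c. c \<in> G \<Longrightarrow> card c = g"
    and transversal: "\<And>b c. b \<in> Bl \<Longrightarrow> c \<in> G \<Longrightarrow> \<exists>!p. p \<in> c \<and> I p b"
    and lam: "\<And>c1 c2 p q. \<lbrakk>c1 \<in> G; c2 \<in> G; c1 \<noteq> c2; p \<in> c1; q \<in> c2\<rbrakk>
       \<Longrightarrow> card {b\<in>Bl. I p b \<and> I q b} = lam"
    using assms(1) by (rule TD_classesE) (rule that)
  obtain c1 c2 where c: "c1 \<in> G" "p \<in> c1" "c2 \<in> G" "q \<in> c2"
    using G assms(2,3) unfolding partition_on_def by blast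
  show ?thesis
  proof (cases "c1 = c2")
    case True
    then have "{b\<in>Bl. I p b \<and> I q b} = {}" using transversal c \<open>p \<noteq> q\<close> by blast
    then show ?thesis by (metis card.empty le0)
  qed (use lam c in simp)
qed

text \<open>The blocks through \<open>p\<close> are partitioned by their point in a class avoiding \<open>p\<close>.\<close>
lemma TD_replication:
  assumes "TD lam k g P Bl I" "k \<ge> 2" "p \<in> P"
  shows "card {b\<in>Bl. I p b} = lam * g"
proof -
  obtain G where G: "partition_on P G" "card G = k" "\<And>c. c \<in> G \<Longrightarrow> card c = g"
    and transversal: "\<And>b c. b \<in> Bl \<Longrightarrow> c \<in> G \<Longrightarrow> \<exists>!p. p \<in> c \<and> I p b"
    and lam: "\<And>c1 c2 p q. \<lbrakk>c1 \<in> G; c2 \<in> G; c1 \<noteq> c2; p \<in> c1; q \<in> c2\<rbrakk>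
       \<Longrightarrow> card {b\<in>Bl. I p b \<and> I q b} = lam"
    using assms(1) by (rule TD_classesE) (rule that)
  have "finite Bl" "g \<ge> 2" using TD_finite_card[OF assms(1)] by simp_all
  obtain c1 where c1: "c1 \<in> G" "p \<in> c1" using G(1) assms(3) unfolding partition_on_def by blast
  have "\<not> G \<subseteq> {c1}" using G(2) \<open>k \<ge> 2\<close> card_mono[of "{c1}" G] by auto
  then obtain c2 where c2: "c2 \<in> G" "c2 \<noteq> c1" by blast
  have "finite c2" using G(3)[OF c2(1)] \<open>g \<ge> 2\<close> by (metis card.infinite not_numeral_le_zero)
  have "{b\<in>Bl. I p b} = (\<Union>q\<in>c2. {b\<in>Bl. I p b \<and> I q b})"
    using transversal[OF _ c2(1)] by blast
  also have "card \<dots> = (\<Sum>q\<in>c2. card {b\<in>Bl. I p b \<and> I q b})"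
    using \<open>finite c2\<close> \<open>finite Bl\<close> transversal[OF _ c2(1)] by (intro card_UN_disjoint) auto
  also have "\<dots> = (\<Sum>q\<in>c2. lam)" using lam[OF c1(1) c2(1) c2(2)[symmetric] c1(2)] by simp
  also have "\<dots> = lam * g" using G(3)[OF c2(1)] by simp
  finally show ?thesis .
qed

lemma TD_separating_blocks:
  assumes "TD lam k g P Bl I" "k \<ge> 2" "p \<in> P" "q \<in> P" "p \<noteq> q"
  shows "lam * g \<le> card {b\<in>Bl. I p b \<noteq> I q b}"
proof -
  have "finite Bl" "g \<ge> 2" using TD_finite_card[OF assms(1)] by simp_all
  define Common where "Common = {b\<in>Bl. I p b \<and> I q b}"
  have common: "card Common \<le> lam" unfolding Common_def by (rule TD_common_blocks_le[OF assms(1,3-5)])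
  have only: "card ({b\<in>Bl. I x b} - Common) = lam * g - card Common" if "x \<in> {p, q}" for x
    using TD_replication[OF assms(1,2)] that assms(3,4) \<open>finite Bl\<close>
    by (subst card_Diff_subset) (auto simp: Common_def)
  have "{b\<in>Bl. I p b \<noteq> I q b} = ({b\<in>Bl. I p b} - Common) \<union> ({b\<in>Bl. I q b} - Common)"
    unfolding Common_def by blast
  also have "card \<dots> = 2 * (lam * g - card Common)"
    using only \<open>finite Bl\<close> by (subst card_Un_disjoint) (auto simp: Common_def)
  finally have "card {b\<in>Bl. I p b \<noteq> I q b} = 2 * (lam * g - card Common)" .
  moreover have "2 * lam \<le> lam * g" using \<open>g \<ge> 2\<close> by simp
  ultimately show ?thesis using common by linarith
qed

lemma STD_block_size_eq:
  assumes "STD lam k g P Bl I" "k \<ge> 2"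
  shows "k = lam * g"
proof -
  have td: "TD lam k g P Bl I" and dual: "TD lam k g Bl P (\<lambda>b p. I p b)"
    using assms(1) unfolding STD_def by auto
  have "card P = k * g" "g \<ge> 2" using TD_finite_card[OF td] by simp_all
  then obtain p where "p \<in> P" using \<open>k \<ge> 2\<close> by fastforce
  then have "card {b\<in>Bl. I p b} = k" using TD_block_size[OF dual] by simp
  with TD_replication[OF td \<open>k \<ge> 2\<close> \<open>p \<in> P\<close>] show ?thesis by simp
qed

section \<open>The incidence graph\<close>

lemma Inl_Inr_in_inc_edges_iff [simp]:
  "(Inl p, Inr b) \<in> inc_edges P Bl I \<longleftrightarrow> p \<in> P \<and> b \<in> Bl \<and> I p b"
  unfolding inc_edges_def by auto

lemma Inr_Inl_in_inc_edges_iff [simp]: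
  "(Inr b, Inl p) \<in> inc_edges P Bl I \<longleftrightarrow> p \<in> P \<and> b \<in> Bl \<and> I p b"
  unfolding inc_edges_def by auto

lemma sym_inc_edges: "sym (inc_edges P Bl I)"
  unfolding inc_edges_def sym_def by auto

lemma inc_edges_bipartite: "\<forall>(x, y)\<in>inc_edges P Bl I. isl x \<noteq> isl y"
  unfolding inc_edges_def by auto

text \<open>Points in different classes share \<open>lam \<ge> 1\<close> blocks; two points of the same class
  are joined through a point of another class, which exists as \<open>k \<ge> 2\<close>.\<close>
lemma TD_inc_points_connected:
  assumes "TD lam k g P Bl I" "lam \<ge> 1" "k \<ge> 2" "p \<in> P" "q \<in> P"
  shows "(Inl p, Inl q) \<in> (inc_edges P Bl I)\<^sup>*"
proof -
  obtain G where G: "partition_on P G" "card G = k" "\<And>c. c \<in> G \<Longrightarrow> card c = g"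
    and transversal: "\<And>b c. b \<in> Bl \<Longrightarrow> c \<in> G \<Longrightarrow> \<exists>!p. p \<in> c \<and> I p b"
    and lam: "\<And>c1 c2 p q. \<lbrakk>c1 \<in> G; c2 \<in> G; c1 \<noteq> c2; p \<in> c1; q \<in> c2\<rbrakk>
       \<Longrightarrow> card {b\<in>Bl. I p b \<and> I q b} = lam"
    using assms(1) by (rule TD_classesE) (rule that)
  have linked: "(Inl x, Inl y) \<in> (inc_edges P Bl I)\<^sup>*"
    if "c \<in> G" "c' \<in> G" "c \<noteq> c'" "x \<in> c" "y \<in> c'" for c c' x y
  proof -
    have "{b\<in>Bl. I x b \<and> I y b} \<noteq> {}" using lam[OF that] \<open>lam \<ge> 1\<close> by force
    then obtain b where "b \<in> Bl" "I x b" "I y b" by blast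
    moreover have "x \<in> P" "y \<in> P" using that G(1) unfolding partition_on_def by auto
    ultimately have "(Inl x, Inr b) \<in> inc_edges P Bl I" "(Inr b, Inl y) \<in> inc_edges P Bl I"
      by simp_all
    then show ?thesis by (meson r_into_rtrancl rtrancl_into_rtrancl)
  qed
  obtain c1 c2 where c: "c1 \<in> G" "p \<in> c1" "c2 \<in> G" "q \<in> c2"
    using G(1) assms(4,5) unfolding partition_on_def by blast
  show ?thesis
  proof (cases "c1 = c2")
    case True
    have "\<not> G \<subseteq> {c1}" using G(2) \<open>k \<ge> 2\<close> card_mono[of "{c1}" G] by auto
    then obtain c' where c': "c' \<in> G" "c' \<noteq> c1" by blast
    have "g \<ge> 2" using TD_finite_card[OF assms(1)] by simp
    then obtain r where "r \<in> c'" using G(3)[OF c'(1)] by fastforce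
    then show ?thesis
      using linked[OF c(1) c'(1) c'(2)[symmetric] c(2)] linked[OF c'(1) c(3)] c' True c(4)
      by (meson rtrancl_trans)
  qed (use linked c in blast)
qed

lemma TD_inc_connected:
  assumes "TD lam k g P Bl I" "lam \<ge> 1" "k \<ge> 2"
    and "u \<in> inc_vertices P Bl" "v \<in> inc_vertices P Bl"
  shows "(u, v) \<in> (inc_edges P Bl I)\<^sup>*"
proof -
  have near_point: "\<exists>p\<in>P. (x, Inl p) \<in> (inc_edges P Bl I)\<^sup>*" if "x \<in> inc_vertices P Bl" for x
  proof (cases x)
    case (Inr b)
    then have "b \<in> Bl" using that unfolding inc_vertices_def by auto
    then have "card {p\<in>P. I p b} = k" by (rule TD_block_size[OF assms(1)])
    then have "{p\<in>P. I p b} \<noteq> {}" using \<open>k \<ge> 2\<close> by (metis card.empty not_numeral_le_zero)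
    then obtain p where "p \<in> P" "I p b" by blast
    then show ?thesis using Inr \<open>b \<in> Bl\<close> by (intro bexI[of _ p] r_into_rtrancl) simp_all
  qed (use that in \<open>auto simp: inc_vertices_def\<close>)
  obtain p q where "p \<in> P" "(u, Inl p) \<in> (inc_edges P Bl I)\<^sup>*"
    and "q \<in> P" "(v, Inl q) \<in> (inc_edges P Bl I)\<^sup>*"
    using near_point assms(4,5) by meson
  moreover have "(Inl q, v) \<in> (inc_edges P Bl I)\<^sup>*"
    using sym_rtrancl[OF sym_inc_edges] \<open>(v, Inl q) \<in> _\<close> by (rule symD)
  ultimately show ?thesis using TD_inc_points_connected[OF assms(1-3)] by (meson rtrancl_trans)
qed

lemma TD_inc_gdist_eq_1_iff:
  assumes "TD lam k g P Bl I" "lam \<ge> 1" "k \<ge> 2" "p \<in> P" "b \<in> Bl"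
  shows "gdist (inc_edges P Bl I) (Inl p) (Inr b) = 1 \<longleftrightarrow> I p b"
    and "gdist (inc_edges P Bl I) (Inr b) (Inl p) = 1 \<longleftrightarrow> I p b"
  using assms(4,5) TD_inc_connected[OF assms(1-3), of "Inl p" "Inr b"]
    TD_inc_connected[OF assms(1-3), of "Inr b" "Inl p"]
  by (simp_all add: gdist_eq_1_iff[simplified] inc_vertices_def)

text \<open>Vertices on different sides are told apart by the parity of their distance to any
  landmark, points by a landmark block through exactly one of them, and blocks dually.\<close>
lemma TD_inc_resolving:
  assumes TD: "TD lam k g P Bl I" "lam \<ge> 1" "k \<ge> 2"
    and "T \<subseteq> Bl" "T' \<subseteq> P" "T \<noteq> {}"
    and separate_points: "\<forall>p\<in>P. \<forall>q\<in>P. p \<noteq> q \<longrightarrow> (\<exists>b\<in>T. I p b \<noteq> I q b)"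
    and separate_blocks: "\<forall>b\<in>Bl. \<forall>c\<in>Bl. b \<noteq> c \<longrightarrow> (\<exists>p\<in>T'. I p b \<noteq> I p c)"
  shows "resolving (inc_vertices P Bl) (inc_edges P Bl I) (Inr ` T \<union> Inl ` T')"
  unfolding resolving_def
proof (intro conjI ballI impI)
  let ?V = "inc_vertices P Bl" and ?E = "inc_edges P Bl I" and ?S = "Inr ` T \<union> Inl ` T'"
  show "?S \<subseteq> ?V" using \<open>T \<subseteq> Bl\<close> \<open>T' \<subseteq> P\<close> unfolding inc_vertices_def by auto
  fix u w assume u: "u \<in> ?V" and w: "w \<in> ?V" and "u \<noteq> w"
  show "\<exists>s\<in>?S. gdist ?E u s \<noteq> gdist ?E w s"
  proof (cases "isl u = isl w")
    case False
    obtain b where "b \<in> T" using \<open>T \<noteq> {}\<close> by blast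
    then have b: "Inr b \<in> ?V" using \<open>T \<subseteq> Bl\<close> unfolding inc_vertices_def by auto
    have "\<not> isl x \<longleftrightarrow> even (gdist ?E x (Inr b))" if "x \<in> ?V" for x
      using gdist_isl_parity[OF inc_edges_bipartite TD_inc_connected[OF TD that b]] by simp
    then have "even (gdist ?E u (Inr b)) \<noteq> even (gdist ?E w (Inr b))" using False u w by auto
    then show ?thesis using \<open>b \<in> T\<close> by force
  next
    case True
    then consider (points) p q where "u = Inl p" "w = Inl q" "p \<in> P" "q \<in> P"
      | (blocks) b c where "u = Inr b" "w = Inr c" "b \<in> Bl" "c \<in> Bl"
      using u w unfolding inc_vertices_def by auto
    then show ?thesis
    proof cases
      case points
      then obtain b where "b \<in> T" "I p b \<noteq> I q b" using separate_points \<open>u \<noteq> w\<close> by blast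
      moreover have "b \<in> Bl" using \<open>b \<in> T\<close> \<open>T \<subseteq> Bl\<close> by blast
      ultimately have "gdist ?E u (Inr b) \<noteq> gdist ?E w (Inr b)"
        using points TD_inc_gdist_eq_1_iff(1)[OF TD] by metis
      then show ?thesis using \<open>b \<in> T\<close> by blast
    next
      case blocks
      then obtain p where "p \<in> T'" "I p b \<noteq> I p c" using separate_blocks \<open>u \<noteq> w\<close> by blast
      moreover have "p \<in> P" using \<open>p \<in> T'\<close> \<open>T' \<subseteq> P\<close> by blast
      ultimately have "gdist ?E u (Inl p) \<noteq> gdist ?E w (Inl p)"
        using blocks TD_inc_gdist_eq_1_iff(2)[OF TD] by metis
      then show ?thesis using \<open>p \<in> T'\<close> by blast
    qed
  qed
qed

lemma TD_exists_separating_blocks: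
  assumes TD: "TD lam k g P Bl I" "k \<ge> 2"
    and "Bl \<noteq> {}" "card Bl \<le> lam * g * g" "card P ^ 2 < 2 ^ s"
  shows "\<exists>T\<subseteq>Bl. card T \<le> (g - 1) * s \<and> (\<forall>p\<in>P. \<forall>q\<in>P. p \<noteq> q \<longrightarrow> (\<exists>b\<in>T. I p b \<noteq> I q b))"
proof -
  have "finite P" "finite Bl" "g \<ge> 2" using TD_finite_card[OF TD(1)] by simp_all
  define Pairs where "Pairs = {(p, q) \<in> P \<times> P. p \<noteq> q}"
  have "card Pairs \<le> card (P \<times> P)"
    unfolding Pairs_def using \<open>finite P\<close> by (intro card_mono) auto
  then have "card Pairs < 2 ^ s"
    using \<open>card P ^ 2 < 2 ^ s\<close> by (simp add: card_cartesian_product power2_eq_square)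
  define Sep where "Sep = (\<lambda>(p, q). {b\<in>Bl. I p b \<noteq> I q b})"
  have "\<exists>T\<subseteq>Bl. card T \<le> (g - 1) * s \<and> (\<forall>x\<in>Pairs. T \<inter> Sep x \<noteq> {})"
  proof (rule exists_small_hitting_set)
    show "finite Pairs"
      unfolding Pairs_def using \<open>finite P\<close> by (auto intro: finite_subset[of _ "P \<times> P"])
    show "card Bl \<le> lam * g * g" by fact
    fix x assume "x \<in> Pairs"
    then obtain p q where "x = (p, q)" "p \<in> P" "q \<in> P" "p \<noteq> q" unfolding Pairs_def by blast
    then show "Sep x \<subseteq> Bl" "lam * g \<le> card (Sep x)"
      unfolding Sep_def using TD_separating_blocks[OF TD] by auto
  qed fact+
  then obtain T where T: "T \<subseteq> Bl" "card T \<le> (g - 1) * s" and hit: "\<forall>x\<in>Pairs. T \<inter> Sep x \<noteq> {}"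
    by blast
  have "\<exists>b\<in>T. I p b \<noteq> I q b" if "p \<in> P" "q \<in> P" "p \<noteq> q" for p q
  proof -
    have "(p, q) \<in> Pairs" unfolding Pairs_def using that by simp
    then show ?thesis using hit unfolding Sep_def by auto
  qed
  with T show ?thesis by blast
qed

lemma STD_metric_dim_le:
  assumes STD: "STD lam k g P Bl I" and "lam \<ge> 1" "k \<ge> 2" "(k * g) ^ 2 < 2 ^ s"
  shows "metric_dim (inc_vertices P Bl) (inc_edges P Bl I) \<le> 2 * ((g - 1) * s)"
proof -
  have TD: "TD lam k g P Bl I" and dual: "TD lam k g Bl P (\<lambda>b p. I p b)"
    using STD unfolding STD_def by auto
  have card: "card P = k * g" "card Bl = k * g" and "finite P" "finite Bl" "g \<ge> 2"
    using TD_finite_card[OF TD] TD_finite_card[OF dual] by simp_all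
  have "k = lam * g" by (rule STD_block_size_eq[OF STD \<open>k \<ge> 2\<close>])
  have "2 * 2 \<le> k * g" using \<open>k \<ge> 2\<close> \<open>g \<ge> 2\<close> by (rule mult_le_mono)
  then have "card P \<ge> 2" "card Bl \<ge> 2" using card by linarith+
  then have "P \<noteq> {}" "Bl \<noteq> {}" by auto
  have sizes: "card P \<le> lam * g * g" "card Bl \<le> lam * g * g" "card P ^ 2 < 2 ^ s" "card Bl ^ 2 < 2 ^ s"
    using card \<open>k = lam * g\<close> assms(4) by simp_all
  obtain T where T: "T \<subseteq> Bl" "card T \<le> (g - 1) * s"
    and separate_points: "\<forall>p\<in>P. \<forall>q\<in>P. p \<noteq> q \<longrightarrow> (\<exists>b\<in>T. I p b \<noteq> I q b)"
    using TD_exists_separating_blocks[OF TD \<open>k \<ge> 2\<close> \<open>Bl \<noteq> {}\<close> sizes(2,3)] by blast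
  obtain T' where T': "T' \<subseteq> P" "card T' \<le> (g - 1) * s"
    and separate_blocks: "\<forall>b\<in>Bl. \<forall>c\<in>Bl. b \<noteq> c \<longrightarrow> (\<exists>p\<in>T'. I p b \<noteq> I p c)"
    using TD_exists_separating_blocks[OF dual \<open>k \<ge> 2\<close> \<open>P \<noteq> {}\<close> sizes(1,4)] by blast
  obtain p q where "p \<in> P" "q \<in> P" "p \<noteq> q"
    using \<open>card P \<ge> 2\<close> card_le_Suc0_iff_eq[OF \<open>finite P\<close>] by force
  then have "T \<noteq> {}" using separate_points by blast
  have "finite T" "finite T'"
    using T(1) T'(1) \<open>finite P\<close> \<open>finite Bl\<close> by (auto intro: finite_subset)
  have "resolving (inc_vertices P Bl) (inc_edges P Bl I) (Inr ` T \<union> Inl ` T')"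
    by (rule TD_inc_resolving[OF TD \<open>lam \<ge> 1\<close> \<open>k \<ge> 2\<close> T(1) T'(1) \<open>T \<noteq> {}\<close>
          separate_points separate_blocks])
  moreover have "finite (Inr ` T \<union> Inl ` T')" using \<open>finite T\<close> \<open>finite T'\<close> by simp
  ultimately have "metric_dim (inc_vertices P Bl) (inc_edges P Bl I) \<le> card (Inr ` T \<union> Inl ` T')"
    by (rule metric_dim_le_card)
  also have "\<dots> \<le> card (Inr ` T :: ('a + 'b) set) + card (Inl ` T' :: ('a + 'b) set)"
    by (rule card_Un_le)
  also have "\<dots> \<le> card T + card T'" by (intro add_mono card_image_le \<open>finite T\<close> \<open>finite T'\<close>)
  finally show ?thesis using T(2) T'(2) by linarith
qed

section \<open>The asymptotic bound\<close>

lemma exists_two_pow_gt_square: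
  fixes N :: nat
  assumes "N \<ge> 1"
  shows "\<exists>s. N ^ 2 < 2 ^ s \<and> real s \<le> 3 * ln N + 1"
proof (intro exI conjI)
  let ?s = "floorlog 2 (N ^ 2)"
  show "N ^ 2 < 2 ^ ?s" using floorlog_bounds[of "N ^ 2" 2] assms by simp
  have "real ?s \<le> log 2 (N ^ 2) + 1"
    using assms by (simp add: floorlog_def of_nat_nat)
  also have "\<dots> = 2 * ln N / ln 2 + 1"
    using assms by (simp add: log_def ln_realpow)
  also have "\<dots> \<le> 2 * ln N / (2 / 3) + 1"
    using assms ln2_ge_two_thirds by (intro add_right_mono divide_left_mono) auto
  finally show "real ?s \<le> 3 * ln N + 1" by simp
qed

lemma STD_metric_dim_le_degenerate:
  assumes STD: "STD lam k g P Bl I" and "k \<le> 1"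
  shows "metric_dim (inc_vertices P Bl) (inc_edges P Bl I) \<le> 2 * g"
proof -
  have TD: "TD lam k g P Bl I" and dual: "TD lam k g Bl P (\<lambda>b p. I p b)"
    using STD unfolding STD_def by auto
  have card: "card P = k * g" "card Bl = k * g" and "finite P" "finite Bl"
    using TD_finite_card[OF TD] TD_finite_card[OF dual] by simp_all
  let ?V = "inc_vertices P Bl" and ?E = "inc_edges P Bl I"
  have "\<exists>v\<in>?V. (u, v) \<in> ?E \<and> u \<noteq> v" if "u \<in> ?V" for u
  proof -
    have "P \<noteq> {} \<or> Bl \<noteq> {}" using that unfolding inc_vertices_def by auto
    then have "k \<noteq> 0" using card \<open>finite P\<close> \<open>finite Bl\<close> by auto
    show ?thesis
    proof (cases u)
      case (Inl p)
      then have "p \<in> P" using that unfolding inc_vertices_def by auto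
      then have "{b\<in>Bl. I p b} \<noteq> {}" using TD_block_size[OF dual] \<open>k \<noteq> 0\<close> by (metis card.empty)
      then obtain b where "b \<in> Bl" "I p b" by blast
      then show ?thesis using Inl \<open>p \<in> P\<close> by (intro bexI[of _ "Inr b"]) (auto simp: inc_vertices_def)
    next
      case (Inr b)
      then have "b \<in> Bl" using that unfolding inc_vertices_def by auto
      then have "{p\<in>P. I p b} \<noteq> {}" using TD_block_size[OF TD] \<open>k \<noteq> 0\<close> by (metis card.empty)
      then obtain p where "p \<in> P" "I p b" by blast
      then show ?thesis using Inr \<open>b \<in> Bl\<close> by (intro bexI[of _ "Inl p"]) (auto simp: inc_vertices_def)
    qed
  qed
  then have "resolving ?V ?E ?V" by (intro resolving_self sym_inc_edges)
  moreover have "finite ?V" unfolding inc_vertices_def using \<open>finite P\<close> \<open>finite Bl\<close> by simp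
  ultimately have "metric_dim ?V ?E \<le> card ?V" by (rule metric_dim_le_card)
  also have "\<dots> \<le> card (Inl ` P :: ('a + 'b) set) + card (Inr ` Bl :: ('a + 'b) set)"
    unfolding inc_vertices_def by (rule card_Un_le)
  also have "\<dots> \<le> card P + card Bl" by (intro add_mono card_image_le \<open>finite P\<close> \<open>finite Bl\<close>)
  also have "\<dots> \<le> 2 * g" using card mult_le_mono1[OF \<open>k \<le> 1\<close>, of g] by linarith
  finally show ?thesis .
qed

lemma STD_metric_dim_le_sqrt_ln:
  assumes STD: "STD lam k g P Bl I" and "lam \<ge> 1" "g \<ge> 2"
  defines "n \<equiv> real (2 * lam * g ^ 2)"
  shows "real (metric_dim (inc_vertices P Bl) (inc_edges P Bl I)) \<le> 8 * sqrt n * ln n"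
proof -
  let ?M = "metric_dim (inc_vertices P Bl) (inc_edges P Bl I)"
  have "g ^ 2 \<le> 2 * lam * g ^ 2" using \<open>lam \<ge> 1\<close> by simp
  then have "real g ^ 2 \<le> n" unfolding n_def by (metis of_nat_le_iff of_nat_power)
  then have "real g \<le> sqrt n" by (simp add: real_le_rsqrt)
  have "exp 1 \<le> n"
    using exp_le \<open>real g ^ 2 \<le> n\<close> \<open>g \<ge> 2\<close> power_mono[of 2 "real g" 2] by simp
  then have "ln n \<ge> 1" using ln_mono[of "exp 1" n] by simp
  have "real ?M \<le> 8 * real g * ln n"
  proof (cases "k \<le> 1")
    case True
    then have "real ?M \<le> 2 * real g" using STD_metric_dim_le_degenerate[OF STD] by simp
    also have "\<dots> \<le> 8 * real g * ln n" using mult_left_mono[OF \<open>ln n \<ge> 1\<close>, of "real g"] by simp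
    finally show ?thesis .
  next
    case False
    then have "k \<ge> 2" by simp
    then have "k = lam * g" by (rule STD_block_size_eq[OF STD])
    then have N: "real (k * g) * 2 = n" unfolding n_def by (simp add: power2_eq_square)
    have "k * g \<ge> 1" using \<open>k \<ge> 2\<close> \<open>g \<ge> 2\<close> by simp
    then obtain s where s: "(k * g) ^ 2 < 2 ^ s" "real s \<le> 3 * ln (k * g) + 1"
      using exists_two_pow_gt_square by blast
    have "real (k * g) \<le> n" "0 < real (k * g)" using N \<open>k * g \<ge> 1\<close> by linarith+
    then have "ln (k * g) \<le> ln n" by (rule ln_mono)
    then have "real s \<le> 4 * ln n" using s(2) \<open>ln n \<ge> 1\<close> by simp
    have "?M \<le> 2 * ((g - 1) * s)" by (rule STD_metric_dim_le[OF STD \<open>lam \<ge> 1\<close> \<open>k \<ge> 2\<close> s(1)])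
    also have "\<dots> \<le> 2 * (g * s)" by simp
    finally have "real ?M \<le> 2 * (real g * real s)" by (metis of_nat_le_iff of_nat_mult of_nat_numeral)
    also have "\<dots> \<le> 2 * (real g * (4 * ln n))"
      using \<open>real s \<le> 4 * ln n\<close> by (intro mult_left_mono) auto
    finally show ?thesis by simp
  qed
  also have "\<dots> \<le> 8 * sqrt n * ln n"
    using \<open>real g \<le> sqrt n\<close> \<open>ln n \<ge> 1\<close> by (intro mult_right_mono) auto
  finally show ?thesis .
qed

theorem corollary3p5:
  shows "\<exists>C::real. \<forall>(lam::nat) (k::nat) (g::nat) (X::nat set) (Bs::nat set) (I::nat \<Rightarrow> nat \<Rightarrow> bool).
     lam \<ge> 1 \<longrightarrow> g \<ge> 2 \<longrightarrow> STD lam k g X Bs I \<longrightarrow>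
     (let n = real (2 * lam * g ^ 2) in
       real (metric_dim (inc_vertices X Bs) (inc_edges X Bs I)) \<le> C * sqrt n * ln n)"
  using STD_metric_dim_le_sqrt_ln unfolding Let_def by blast

end
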